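(* Let $S(t)$ be the $\alpha$-stable inverse subordinator, $\alpha\in(0,1)$, and assume $K=Z_0>0$, $r=0$, $\sigma>0$, $\sigma^{Ba}=\sigma Z_0$, $T>0$. Then the fair call prices in the subordinated Bachelier and subordinated Black–Scholes models satisfy $$0\le C^{Ba}_S(T)-C_S(T)\le \frac{T^{\frac32\alpha}\,\Gamma\!\left(\tfrac52\right)}{\Gamma\!\left(\tfrac32\alpha+1\right)}\cdot\frac{Z_0}{12\sqrt{2\pi}}\,\sigma^3 .$$
   Context: The $\alpha$-stable inverse subordinator is $S(t)=\inf\{\tau\ge0: U(\tau)\ge t\}$ where $U$ is the $\alpha$-stable subordinator, i.e. $\mathbb{E}e^{-uU(t)}=e^{-tu^\alpha}$. $B$ is a standard Brownian motion independent of $S$. For $\tau\ge0$, $C^{Ba}(\tau)=\sigma^{Ba}\sqrt{\tau}/\sqrt{2\pi}$ is the classical at-the-money Bachelier call price with $r=0$ and $C(\tau)=Z_0(2\Phi(\sigma\sqrt\tau/2)-1)$ is the classical at-the-money Black–Scholes call price with $r=0$ ($\Phi$ the standard normal CDF). The subordinated fair prices are $C^{Ba}_S(T)=\mathbb{E}\,C^{Ba}(S(T))$ and $C_S(T)=\mathbb{E}\,C(S(T))$. *)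

theory Defs
  imports "HOL-Probability.Probability"
begin

definition Phi :: "real \<Rightarrow> real" where
  "Phi x = (LINT y:{..x}|lborel. std_normal_density y)"

definition stable_subordinator ::
  "'a measure \<Rightarrow> real \<Rightarrow> (real \<Rightarrow> 'a \<Rightarrow> real) \<Rightarrow> bool" where
  "stable_subordinator M \<alpha> U \<longleftrightarrow>
     prob_space M \<and>
     (\<forall>t\<ge>0. U t \<in> borel_measurable M) \<and>
     (\<forall>\<omega>\<in>space M. U 0 \<omega> = 0) \<and>
     (\<forall>\<omega>\<in>space M. mono_on {0..} (\<lambda>t. U t \<omega>)) \<and>
     (\<forall>\<omega>\<in>space M. \<forall>t\<ge>0. continuous (at_right t) (\<lambda>s. U s \<omega>)) \<and>
     (\<forall>(n::nat) (t::nat \<Rightarrow> real). 0 \<le> t 0 \<and> (\<forall>i<n. t i \<le> t (Suc i)) \<longrightarrow>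
        prob_space.indep_vars M (\<lambda>_. borel) (\<lambda>i \<omega>. U (t (Suc i)) \<omega> - U (t i) \<omega>) {..<n}) \<and>
     (\<forall>s\<ge>0. \<forall>t\<ge>0. distr M borel (\<lambda>\<omega>. U (s + t) \<omega> - U s \<omega>) = distr M borel (U t)) \<and>
     (\<forall>t\<ge>0. \<forall>u\<ge>0. (\<integral>\<omega>. exp (- u * U t \<omega>) \<partial>M) = exp (- t * u powr \<alpha>))"

definition inverse_subordinator :: "(real \<Rightarrow> 'a \<Rightarrow> real) \<Rightarrow> real \<Rightarrow> 'a \<Rightarrow> real" where
  "inverse_subordinator U t \<omega> = Inf {\<tau>. 0 \<le> \<tau> \<and> t \<le> U \<tau> \<omega>}"

text \<open>At-the-money call prices with r = 0.\<close>
definition bachelier_atm :: "real \<Rightarrow> real \<Rightarrow> real" where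
  "bachelier_atm \<sigma>Ba \<tau> = \<sigma>Ba * sqrt \<tau> / sqrt (2 * pi)"

definition bs_atm :: "real \<Rightarrow> real \<Rightarrow> real \<Rightarrow> real" where
  "bs_atm Z0 \<sigma> \<tau> = Z0 * (2 * Phi (\<sigma> * sqrt \<tau> / 2) - 1)"

end

theory Submission
  imports Defs
begin

(* With x = sigma sqrt tau / 2 the at-the-money prices differ by 2 Z0 times the integral over
   [0, x] of phi 0 - phi y; since 1 - y^2/2 <= exp (- y^2/2) <= 1 this lies between 0 and
   Z0 sigma^3 tau^(3/2) / (24 sqrt (2 pi)). It remains to bound E S(T)^(3/2). By the layer-cake
   formula E S^p is the integral of p tau^(p-1) P(S > tau), and S(T) > tau forces U(tau) < T.
   Since U(tau) and tau^(1/alpha) U(1) have the same Laplace transform, they have the same law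
   (Weierstrass approximation applied to exp (- U)), so E S(T)^p <= T^(p alpha) E U(1)^(-p alpha).
   Writing x^(-a) Gamma (a + 1) as an integral of exp (- tau^(1/alpha) x) and using the Laplace
   transform once more gives E U(1)^(-p alpha) = Gamma (p + 1) / Gamma (p alpha + 1). *)

lemma set_integrable_std_normal_density [intro]:
  "A \<in> sets borel \<Longrightarrow> set_integrable lborel A std_normal_density"
  unfolding set_integrable_def by (intro integrable_mult_indicator) auto

lemma Phi_0: "Phi 0 = 1/2"
proof -
  have reflect: "(LINT y:{0..}|lborel. std_normal_density y) = Phi 0"
    unfolding Phi_def set_lebesgue_integral_def
    by (subst lborel_integral_real_affine[where c="-1" and t=0])
       (auto simp: std_normal_density_def indicator_def)
  have "{..0::real} \<union> {0..} = UNIV" by auto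
  then have "1 = (LINT y:{..0} \<union> {0..}|lborel. std_normal_density y)"
    by (simp add: set_lebesgue_integral_def)
  also have "\<dots> = Phi 0 + (LINT y:{0..}|lborel. std_normal_density y)"
    unfolding Phi_def
    by (rule set_integral_Un_AE) (auto intro: eventually_mono[OF AE_lborel_singleton[of 0]])
  finally show ?thesis using reflect by simp
qed

lemma Phi_eq_half_plus:
  assumes "0 \<le> x"
  shows "Phi x = 1/2 + (LINT y:{0..x}|lborel. std_normal_density y)"
proof -
  have "{..0} \<union> {0..x} = {..x}"
    using assms by auto
  then have "Phi x = (LINT y:{..0} \<union> {0..x}|lborel. std_normal_density y)"
    unfolding Phi_def by simp
  also have "\<dots> = Phi 0 + (LINT y:{0..x}|lborel. std_normal_density y)"
    unfolding Phi_def
    by (rule set_integral_Un_AE) (auto intro: eventually_mono[OF AE_lborel_singleton[of 0]])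
  finally show ?thesis by (simp add: Phi_0)
qed

lemma Phi_mono: "mono Phi"
proof (rule monoI)
  fix x y :: real
  assume "x \<le> y"
  then show "Phi x \<le> Phi y"
    using set_integrable_std_normal_density[of "{..x}"] set_integrable_std_normal_density[of "{..y}"]
    unfolding Phi_def set_lebesgue_integral_def set_integrable_def
    by (intro integral_mono) (auto simp: indicator_def)
qed

lemma borel_measurable_Phi [measurable]: "Phi \<in> borel_measurable borel"
  by (rule borel_measurable_mono[OF Phi_mono])

lemma set_integral_FTC_Icc:
  fixes f F :: "real \<Rightarrow> real"
  assumes "a \<le> b" and "\<And>x. DERIV F x :> f x" and "continuous_on {a..b} f"
  shows "(LINT x:{a..b}|lborel. f x) = F b - F a"
  unfolding set_lebesgue_integral_def
  using assms
  by (intro integral_FTC_atLeastAtMost)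
     (auto intro: has_field_derivative_at_within simp: has_real_derivative_iff_has_vector_derivative[symmetric])

lemma integral_std_normal_density_Icc_bounds:
  assumes x: "0 \<le> x"
  shows "(x - x^3/6) / sqrt (2*pi) \<le> (LINT y:{0..x}|lborel. std_normal_density y)"
    and "(LINT y:{0..x}|lborel. std_normal_density y) \<le> x / sqrt (2*pi)"
proof -
  have "(x - x^3/6) / sqrt (2*pi) = (LINT y:{0..x}|lborel. (1 - y^2/2) / sqrt (2*pi))"
    using x
    by (subst set_integral_FTC_Icc[where F="\<lambda>y. (y - y^3/6) / sqrt (2*pi)"])
       (auto intro!: derivative_eq_intros continuous_intros simp: field_simps power2_eq_square)
  also have "\<dots> \<le> (LINT y:{0..x}|lborel. std_normal_density y)"
  proof (rule set_integral_mono)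
    show "set_integrable lborel {0..x} (\<lambda>y. (1 - y^2/2) / sqrt (2*pi))"
      by (intro borel_integrable_atLeastAtMost' continuous_intros) auto
    show "set_integrable lborel {0..x} std_normal_density"
      by auto
    fix y :: real
    have "1 - y^2/2 \<le> exp (-(y^2/2))"
      using exp_ge_add_one_self[of "-(y^2/2)"] by simp
    then show "(1 - y^2/2) / sqrt (2*pi) \<le> std_normal_density y"
      by (simp add: std_normal_density_def divide_right_mono)
  qed
  finally show "(x - x^3/6) / sqrt (2*pi) \<le> (LINT y:{0..x}|lborel. std_normal_density y)" .
  have "(LINT y:{0..x}|lborel. std_normal_density y) \<le> (LINT y:{0..x}|lborel. 1 / sqrt (2*pi))"
  proof (rule set_integral_mono)
    show "set_integrable lborel {0..x} (\<lambda>y. 1 / sqrt (2*pi))"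
      by (rule borel_integrable_atLeastAtMost') auto
    show "set_integrable lborel {0..x} std_normal_density"
      by auto
  qed (auto simp: std_normal_density_def divide_right_mono)
  also have "\<dots> = x / sqrt (2*pi)"
    using x by (subst set_integral_FTC_Icc[where F="\<lambda>y. y / sqrt (2*pi)"])
       (auto intro!: derivative_eq_intros continuous_intros simp: divide_simps)
  finally show "(LINT y:{0..x}|lborel. std_normal_density y) \<le> x / sqrt (2*pi)" .
qed

lemma bachelier_atm_minus_bs_atm_bounds:
  assumes "0 \<le> \<tau>" "0 \<le> \<sigma>" "0 \<le> Z0"
  shows "0 \<le> bachelier_atm (\<sigma> * Z0) \<tau> - bs_atm Z0 \<sigma> \<tau>"
    and "bachelier_atm (\<sigma> * Z0) \<tau> - bs_atm Z0 \<sigma> \<tau> \<le> Z0 * \<sigma>^3 / (24 * sqrt (2*pi)) * \<tau> powr (3/2)"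
proof -
  define x where "x = \<sigma> * sqrt \<tau> / 2"
  define I where "I = (LINT y:{0..x}|lborel. std_normal_density y)"
  have x: "0 \<le> x"
    using assms by (simp add: x_def)
  have diff: "bachelier_atm (\<sigma> * Z0) \<tau> - bs_atm Z0 \<sigma> \<tau> = 2 * Z0 * (x / sqrt (2*pi) - I)"
    using Phi_eq_half_plus[OF x]
    unfolding bachelier_atm_def bs_atm_def x_def[symmetric] I_def[symmetric]
    by (simp add: x_def field_simps)
  show "0 \<le> bachelier_atm (\<sigma> * Z0) \<tau> - bs_atm Z0 \<sigma> \<tau>"
    using diff integral_std_normal_density_Icc_bounds(2)[OF x] assms by (simp add: I_def)
  have "x / sqrt (2*pi) - I \<le> x^3 / 6 / sqrt (2*pi)"
    using integral_std_normal_density_Icc_bounds(1)[OF x] by (simp add: I_def diff_divide_distrib)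
  then have "2 * Z0 * (x / sqrt (2*pi) - I) \<le> 2 * Z0 * (x^3 / 6 / sqrt (2*pi))"
    using assms by (intro mult_left_mono) auto
  also have "\<dots> = Z0 * \<sigma>^3 / (24 * sqrt (2*pi)) * sqrt \<tau> ^ 3"
    by (simp add: x_def power_mult_distrib field_simps)
  also have "sqrt \<tau> ^ 3 = \<tau> powr (3/2)"
    using assms by (cases "\<tau> = 0") (simp_all add: powr_half_sqrt[symmetric] powr_power)
  finally show "bachelier_atm (\<sigma> * Z0) \<tau> - bs_atm Z0 \<sigma> \<tau> \<le> Z0 * \<sigma>^3 / (24 * sqrt (2*pi)) * \<tau> powr (3/2)"
    using diff by simp
qed

context prob_space
begin

lemma integral_polynomial_eq_of_moments_eq:
  fixes A B :: "'a \<Rightarrow> real"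
  assumes [measurable]: "A \<in> borel_measurable M" "B \<in> borel_measurable M"
    and A01: "\<And>x. x \<in> space M \<Longrightarrow> A x \<in> {0..1}" and B01: "\<And>x. x \<in> space M \<Longrightarrow> B x \<in> {0..1}"
    and moments: "\<And>n::nat. expectation (\<lambda>x. A x ^ n) = expectation (\<lambda>x. B x ^ n)"
    and p: "real_polynomial_function p"
  shows "expectation (\<lambda>x. p (A x)) = expectation (\<lambda>x. p (B x))"
proof -
  obtain a n where p_eq: "p = (\<lambda>x. \<Sum>i\<le>n. a i * x^i)"
    using p real_polynomial_function_iff_sum by blast
  have "integrable M (\<lambda>x. A x ^ i)" "integrable M (\<lambda>x. B x ^ i)" for i
    using A01 B01 by (auto intro!: integrable_const_bound[where B=1] simp: power_le_one abs_le_iff)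
  then show ?thesis
    unfolding p_eq by (simp add: Bochner_Integration.integral_sum moments)
qed

lemma integral_continuous_eq_of_moments_eq:
  fixes A B :: "'a \<Rightarrow> real" and f :: "real \<Rightarrow> real"
  assumes [measurable]: "A \<in> borel_measurable M" "B \<in> borel_measurable M"
    and A01: "\<And>x. x \<in> space M \<Longrightarrow> A x \<in> {0..1}" and B01: "\<And>x. x \<in> space M \<Longrightarrow> B x \<in> {0..1}"
    and moments: "\<And>n::nat. expectation (\<lambda>x. A x ^ n) = expectation (\<lambda>x. B x ^ n)"
    and f: "continuous_on UNIV f"
  shows "expectation (\<lambda>x. f (A x)) = expectation (\<lambda>x. f (B x))"
proof -
  have integrable_comp: "integrable M (\<lambda>x. g (X x))"
    if g: "continuous_on UNIV g" and X: "X \<in> borel_measurable M" "\<And>x. x \<in> space M \<Longrightarrow> X x \<in> {0..1}"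
    for g :: "real \<Rightarrow> real" and X :: "'a \<Rightarrow> real"
  proof -
    obtain C where "\<And>y. y \<in> {0..1} \<Longrightarrow> \<bar>g y\<bar> \<le> C"
      using compact_imp_bounded[OF compact_continuous_image[OF continuous_on_subset[OF g] compact_Icc]]
      by (force simp: bounded_iff)
    then show ?thesis
      using X borel_measurable_continuous_onI[OF g]
      by (intro integrable_const_bound[where B=C]) (auto simp: measurable_compose[OF X(1)])
  qed
  have close: "\<bar>expectation (\<lambda>x. f (A x)) - expectation (\<lambda>x. f (B x))\<bar> \<le> 2 * e" if e: "e > 0" for e
  proof -
    obtain g where g: "real_polynomial_function g" and approx: "\<And>y. y \<in> {0..1} \<Longrightarrow> \<bar>f y - g y\<bar> < e"
      using Stone_Weierstrass_real_polynomial_function[OF compact_Icc continuous_on_subset[OF f] e] by blast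
    have gc: "continuous_on UNIV g"
      using g continuous_on_polymonial_function real_polynomial_function_eq by blast
    have approx_int: "\<bar>expectation (\<lambda>x. f (X x)) - expectation (\<lambda>x. g (X x))\<bar> \<le> e"
      if "X \<in> borel_measurable M" "\<And>x. x \<in> space M \<Longrightarrow> X x \<in> {0..1}" for X :: "'a \<Rightarrow> real"
    proof -
      have int_f: "integrable M (\<lambda>x. f (X x))" and int_g: "integrable M (\<lambda>x. g (X x))"
        using that by (auto intro: integrable_comp f gc)
      have "\<bar>expectation (\<lambda>x. f (X x)) - expectation (\<lambda>x. g (X x))\<bar>
          = \<bar>expectation (\<lambda>x. f (X x) - g (X x))\<bar>"
        using int_f int_g by simp
      also have "\<dots> \<le> expectation (\<lambda>x. \<bar>f (X x) - g (X x)\<bar>)"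
        by (rule integral_abs_bound)
      also have "\<dots> \<le> expectation (\<lambda>_. e)"
        using that(2) approx int_f int_g
        by (intro integral_mono integrable_abs Bochner_Integration.integrable_diff) (auto intro: less_imp_le)
      finally show ?thesis
        by (simp add: prob_space)
    qed
    have "expectation (\<lambda>x. g (A x)) = expectation (\<lambda>x. g (B x))"
      by (rule integral_polynomial_eq_of_moments_eq[OF _ _ A01 B01 moments g]) auto
    moreover have "\<bar>expectation (\<lambda>x. f (A x)) - expectation (\<lambda>x. g (A x))\<bar> \<le> e"
      using A01 by (intro approx_int) auto
    moreover have "\<bar>expectation (\<lambda>x. f (B x)) - expectation (\<lambda>x. g (B x))\<bar> \<le> e"
      using B01 by (intro approx_int) auto
    ultimately show ?thesis
      by (simp add: abs_le_iff)
  qed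
  have "\<bar>expectation (\<lambda>x. f (A x)) - expectation (\<lambda>x. f (B x))\<bar> \<le> 0"
  proof (rule field_le_epsilon)
    fix e :: real
    assume "0 < e"
    then show "\<bar>expectation (\<lambda>x. f (A x)) - expectation (\<lambda>x. f (B x))\<bar> \<le> 0 + e"
      using close[of "e/2"] by simp
  qed
  then show ?thesis
    by simp
qed

lemma null_sets_of_prob_le_exp_diff:
  assumes A: "A \<in> sets M" and le: "\<And>x. 0 \<le> x \<Longrightarrow> prob A \<le> exp (c - x)"
  shows "A \<in> null_sets M"
proof -
  have "((\<lambda>x::real. exp c * exp (- x)) \<longlongrightarrow> exp c * 0) at_top"
    by (intro tendsto_mult tendsto_const filterlim_compose[OF exp_at_bot filterlim_uminus_at_bot_at_top])
  moreover have "eventually (\<lambda>x. prob A \<le> exp c * exp (- x)) at_top"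
    using eventually_ge_at_top[of 0] by eventually_elim (simp add: le flip: exp_add)
  ultimately have "prob A \<le> 0"
    by (intro tendsto_lowerbound) auto
  then show ?thesis
    using A measure_nonneg[of M A] by (simp add: null_sets_def emeasure_eq_measure)
qed

lemma prob_less_le_prob_le_of_laplace_eq:
  fixes X Y :: "'a \<Rightarrow> real"
  assumes [measurable]: "X \<in> borel_measurable M" "Y \<in> borel_measurable M"
    and X0: "\<And>x. x \<in> space M \<Longrightarrow> 0 \<le> X x" and Y0: "\<And>x. x \<in> space M \<Longrightarrow> 0 \<le> Y x"
    and laplace: "\<And>n::nat. expectation (\<lambda>x. exp (- real n * X x)) = expectation (\<lambda>x. exp (- real n * Y x))"
  shows "prob {x\<in>space M. X x < t} \<le> prob {x\<in>space M. Y x \<le> t}"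
proof -
  \<comment> \<open>continuous functions decreasing to the indicator of \<open>[exp (- t), 1]\<close>\<close>
  define g where "g k y = max 0 (min 1 (real k * (y - exp (- t)) + 1))" for k :: nat and y :: real
  have g_cont: "continuous_on UNIV (g k)" for k
    unfolding g_def by (intro continuous_intros)
  have g_int: "integrable M (\<lambda>x. g k (exp (- Z x)))" if "Z \<in> borel_measurable M" for k Z
    using that borel_measurable_continuous_onI[OF g_cont]
    by (intro integrable_const_bound[where B=1]) (auto simp: g_def)
  have moments: "expectation (\<lambda>x. exp (- X x) ^ n) = expectation (\<lambda>x. exp (- Y x) ^ n)" for n :: nat
    using laplace[of n] by (simp add: exp_of_nat_mult[symmetric])
  have g_eq: "expectation (\<lambda>x. g k (exp (- X x))) = expectation (\<lambda>x. g k (exp (- Y x)))" for k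
    using X0 Y0 by (intro integral_continuous_eq_of_moments_eq[OF _ _ _ _ moments g_cont]) auto
  have le_g: "prob {x\<in>space M. X x < t} \<le> expectation (\<lambda>x. g k (exp (- Y x)))" for k
  proof -
    have "prob {x\<in>space M. X x < t} = expectation (indicator {x\<in>space M. X x < t})"
      by simp
    also have "\<dots> \<le> expectation (\<lambda>x. g k (exp (- X x)))"
      by (intro integral_mono g_int integrable_real_indicator)
         (auto simp: g_def indicator_def less_top[symmetric])
    finally show ?thesis
      using g_eq[of k] by simp
  qed
  have "(\<lambda>k. g k (exp (- Y x))) \<longlonglongrightarrow> indicator {x\<in>space M. Y x \<le> t} x" if "x \<in> space M" for x
  proof (cases "Y x \<le> t")
    case True
    then have "g k (exp (- Y x)) = 1" for k
      by (simp add: g_def)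
    then show ?thesis
      using True that by simp
  next
    case False
    then have gap: "0 < exp (- t) - exp (- Y x)"
      by simp
    obtain N :: nat where N: "1 / (exp (- t) - exp (- Y x)) \<le> real N"
      using real_arch_simple by blast
    have "g k (exp (- Y x)) = 0" if "N \<le> k" for k
    proof -
      have "1 \<le> real N * (exp (- t) - exp (- Y x))"
        using N gap by (simp add: field_simps)
      also have "\<dots> \<le> real k * (exp (- t) - exp (- Y x))"
        using that gap by (intro mult_right_mono) auto
      finally show ?thesis
        by (simp add: g_def algebra_simps)
    qed
    then have "eventually (\<lambda>k. g k (exp (- Y x)) = 0) sequentially"
      unfolding eventually_sequentially by blast
    then show ?thesis
      using False by (simp add: tendsto_eventually)
  qed
  then have "(\<lambda>k. expectation (\<lambda>x. g k (exp (- Y x)))) \<longlonglongrightarrow> expectation (indicator {x\<in>space M. Y x \<le> t})"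
    by (intro integral_dominated_convergence[where w="\<lambda>_. 1"]) (auto simp: g_def)
  then have "prob {x\<in>space M. X x < t} \<le> expectation (indicator {x\<in>space M. Y x \<le> t})"
    using le_g by (intro LIMSEQ_le_const) auto
  then show ?thesis
    by simp
qed

end

lemma nn_integral_powr_Icc:
  fixes p b :: real
  assumes "0 < p" "0 \<le> b"
  shows "(\<integral>\<^sup>+x. ennreal (p * x powr (p - 1)) * indicator {0..b} x \<partial>lborel) = ennreal (b powr p)"
proof -
  have "((\<lambda>x. p * x powr (p - 1)) has_integral b powr p - 0 powr p) {0..b}"
  proof (rule fundamental_theorem_of_calculus_interior)
    show "continuous_on {0..b} (\<lambda>x. x powr p)"
      using assms by (intro continuous_on_powr' continuous_intros) auto
    show "((\<lambda>x. x powr p) has_vector_derivative p * x powr (p - 1)) (at x)" if "x \<in> {0<..<b}" for x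
      using that has_real_derivative_powr[of x p]
      by (simp add: has_real_derivative_iff_has_vector_derivative[symmetric])
  qed (use assms in simp)
  then have "((\<lambda>x. if x \<in> {0..b} then p * x powr (p - 1) else 0) has_integral b powr p) UNIV"
    using assms by (simp only: has_integral_restrict_UNIV) simp
  then have "((\<lambda>x. p * x powr (p - 1) * indicator {0..b} x) has_integral b powr p) UNIV"
    by (rule has_integral_eq[rotated]) (simp add: indicator_def)
  then have "integral\<^sup>N lborel (\<lambda>x. p * x powr (p - 1) * indicator {0..b} x) = b powr p"
    using assms by (intro nn_integral_has_integral_lborel) (auto simp: indicator_def)
  moreover have "(\<integral>\<^sup>+x. ennreal (p * x powr (p - 1)) * indicator {0..b} x \<partial>lborel)
      = integral\<^sup>N lborel (\<lambda>x. p * x powr (p - 1) * indicator {0..b} x)"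
    by (rule nn_integral_cong) (simp add: indicator_def)
  ultimately show ?thesis
    by simp
qed

lemma nn_integral_powr_less:
  fixes p y :: real
  assumes "0 < p" "0 \<le> y"
  shows "(\<integral>\<^sup>+\<tau>. ennreal (p * \<tau> powr (p - 1)) * indicator {0..} \<tau> * (if \<tau> < y then 1 else 0) \<partial>lborel)
    = ennreal (y powr p)"
proof -
  have "(\<integral>\<^sup>+\<tau>. ennreal (p * \<tau> powr (p - 1)) * indicator {0..} \<tau> * (if \<tau> < y then 1 else 0) \<partial>lborel)
      = (\<integral>\<^sup>+\<tau>. ennreal (p * \<tau> powr (p - 1)) * indicator {0..y} \<tau> \<partial>lborel)"
    using AE_lborel_singleton[of y]
    by (intro nn_integral_cong_AE) (auto elim!: eventually_mono simp: indicator_def)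
  also have "\<dots> = ennreal (y powr p)"
    using assms by (rule nn_integral_powr_Icc)
  finally show ?thesis .
qed

lemma nn_integral_exp_minus_atLeast:
  "(\<integral>\<^sup>+t. ennreal (exp (- t)) * indicator {c..} t \<partial>lborel) = ennreal (exp (- c))"
proof -
  have "((\<lambda>t::real. - exp (- t)) \<longlongrightarrow> - 0) at_top"
    by (intro tendsto_minus filterlim_compose[OF exp_at_bot filterlim_uminus_at_bot_at_top])
  then have "(\<integral>\<^sup>+t. ennreal (exp (- t)) * indicator {c..} t \<partial>lborel) = ennreal (0 - (- exp (- c)))"
    by (intro nn_integral_FTC_atLeast) (auto intro!: derivative_eq_intros)
  then show ?thesis
    by simp
qed

lemma nn_integral_powr_scaled_le:
  fixes p \<alpha> x t :: real
  assumes p: "0 < p" and \<alpha>: "0 < \<alpha>" and x: "0 < x" and t: "0 \<le> t"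
  shows "(\<integral>\<^sup>+\<tau>. ennreal (p * \<tau> powr (p - 1)) * indicator {0..} \<tau> * (if \<tau> powr (1/\<alpha>) * x \<le> t then 1 else 0) \<partial>lborel)
    = ennreal ((t / x) powr (p * \<alpha>))"
proof -
  have iff: "\<tau> powr (1/\<alpha>) * x \<le> t \<longleftrightarrow> \<tau> \<le> (t / x) powr \<alpha>" if "0 \<le> \<tau>" for \<tau>
  proof -
    have "\<tau> powr (1/\<alpha>) * x \<le> t \<longleftrightarrow> \<tau> powr (1/\<alpha>) \<le> t / x"
      using x by (simp add: field_simps)
    also have "\<dots> \<longleftrightarrow> (\<tau> powr (1/\<alpha>)) powr \<alpha> \<le> (t / x) powr \<alpha>"
      using \<alpha> x t powr_less_mono2[of \<alpha> "t / x" "\<tau> powr (1/\<alpha>)"] powr_mono2[of \<alpha> "\<tau> powr (1/\<alpha>)" "t / x"]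
      by (auto simp: not_le[symmetric])
    finally show ?thesis
      using \<alpha> that by (simp add: powr_powr)
  qed
  have "(\<integral>\<^sup>+\<tau>. ennreal (p * \<tau> powr (p - 1)) * indicator {0..} \<tau> * (if \<tau> powr (1/\<alpha>) * x \<le> t then 1 else 0) \<partial>lborel)
      = (\<integral>\<^sup>+\<tau>. ennreal (p * \<tau> powr (p - 1)) * indicator {0..(t / x) powr \<alpha>} \<tau> \<partial>lborel)"
    by (rule nn_integral_cong) (auto simp: indicator_def iff)
  also have "\<dots> = ennreal (((t / x) powr \<alpha>) powr p)"
    using p by (intro nn_integral_powr_Icc) auto
  finally show ?thesis
    by (simp add: powr_powr mult.commute)
qed

lemma nn_integral_powr_exp_scaled:
  fixes p \<alpha> x :: real
  assumes p: "0 < p" and \<alpha>: "0 < \<alpha>" and x: "0 < x"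
  shows "(\<integral>\<^sup>+\<tau>. ennreal (p * \<tau> powr (p - 1)) * indicator {0..} \<tau> * ennreal (exp (- (\<tau> powr (1/\<alpha>) * x))) \<partial>lborel)
    = ennreal (Gamma (p * \<alpha> + 1) * x powr (- (p * \<alpha>)))"
proof -
  define a where "a = p * \<alpha>"
  have a: "0 < a"
    using p \<alpha> by (simp add: a_def)
  let ?f = "\<lambda>\<tau>::real. ennreal (p * \<tau> powr (p - 1)) * indicator {0..} \<tau>"
  let ?P = "\<lambda>\<tau> t. (if \<tau> powr (1/\<alpha>) * x \<le> t then 1 else 0 :: ennreal)"
  have "ennreal (Gamma (a + 1) * x powr (- a))
      = (\<integral>\<^sup>+t. ennreal (indicator {0..} t * t powr (a + 1 - 1) / exp t) * ennreal (x powr (- a)) \<partial>lborel)"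
    using a by (simp add: Gamma_conv_nn_integral_real ennreal_mult nn_integral_multc)
  also have "\<dots> = (\<integral>\<^sup>+t. ennreal (exp (- t)) * indicator {0..} t * ennreal ((t / x) powr a) \<partial>lborel)"
    using x by (intro nn_integral_cong)
      (auto simp: indicator_def ennreal_mult[symmetric] powr_divide powr_minus exp_minus field_simps)
  also have "\<dots> = (\<integral>\<^sup>+t. ennreal (exp (- t)) * indicator {0..} t * (\<integral>\<^sup>+\<tau>. ?f \<tau> * ?P \<tau> t \<partial>lborel) \<partial>lborel)"
    using nn_integral_powr_scaled_le[OF p \<alpha> x] by (intro nn_integral_cong) (simp add: a_def indicator_def)
  also have "\<dots> = (\<integral>\<^sup>+t. (\<integral>\<^sup>+\<tau>. ennreal (exp (- t)) * indicator {0..} t * (?f \<tau> * ?P \<tau> t) \<partial>lborel) \<partial>lborel)"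
    by (intro nn_integral_cong nn_integral_cmult[symmetric]) measurable
  also have "\<dots> = (\<integral>\<^sup>+\<tau>. (\<integral>\<^sup>+t. ennreal (exp (- t)) * indicator {0..} t * (?f \<tau> * ?P \<tau> t) \<partial>lborel) \<partial>lborel)"
    by (rule lborel_pair.Fubini') measurable
  also have "\<dots> = (\<integral>\<^sup>+\<tau>. ?f \<tau> * (\<integral>\<^sup>+t. ennreal (exp (- t)) * indicator {\<tau> powr (1/\<alpha>) * x..} t \<partial>lborel) \<partial>lborel)"
  proof (intro nn_integral_cong)
    fix \<tau> :: real
    have "0 \<le> \<tau> powr (1/\<alpha>) * x"
      using x by simp
    then have "(\<integral>\<^sup>+t. ennreal (exp (- t)) * indicator {0..} t * (?f \<tau> * ?P \<tau> t) \<partial>lborel)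
        = (\<integral>\<^sup>+t. ?f \<tau> * (ennreal (exp (- t)) * indicator {\<tau> powr (1/\<alpha>) * x..} t) \<partial>lborel)"
      by (intro nn_integral_cong) (auto simp: indicator_def mult.commute)
    also have "\<dots> = ?f \<tau> * (\<integral>\<^sup>+t. ennreal (exp (- t)) * indicator {\<tau> powr (1/\<alpha>) * x..} t \<partial>lborel)"
      by (rule nn_integral_cmult) measurable
    finally show "(\<integral>\<^sup>+t. ennreal (exp (- t)) * indicator {0..} t * (?f \<tau> * ?P \<tau> t) \<partial>lborel)
        = ?f \<tau> * (\<integral>\<^sup>+t. ennreal (exp (- t)) * indicator {\<tau> powr (1/\<alpha>) * x..} t \<partial>lborel)" .
  qed
  also have "\<dots> = (\<integral>\<^sup>+\<tau>. ?f \<tau> * ennreal (exp (- (\<tau> powr (1/\<alpha>) * x))) \<partial>lborel)"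
    by (simp only: nn_integral_exp_minus_atLeast)
  finally show ?thesis
    by (simp add: a_def)
qed

lemma nn_integral_cmult_if:
  assumes "{x\<in>space N. P x} \<in> sets N"
  shows "(\<integral>\<^sup>+x. c * (if P x then 1 else 0) \<partial>N) = c * emeasure N {x\<in>space N. P x}"
proof -
  have "(\<integral>\<^sup>+x. c * (if P x then 1 else 0) \<partial>N) = (\<integral>\<^sup>+x. c * indicator {x\<in>space N. P x} x \<partial>N)"
    by (rule nn_integral_cong) (simp add: indicator_def)
  then show ?thesis
    using assms by (simp add: nn_integral_cmult_indicator)
qed

lemma
  fixes f :: "real \<Rightarrow> real" and t :: real
  defines "H \<equiv> {\<tau>. 0 \<le> \<tau> \<and> t \<le> f \<tau>}"
  shows Inf_hitting_nonneg: "H \<noteq> {} \<Longrightarrow> 0 \<le> Inf H"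
    and less_Inf_hitting_imp_less: "0 \<le> \<tau> \<Longrightarrow> \<tau> < Inf H \<Longrightarrow> f \<tau> < t"
proof -
  have bdd: "bdd_below H"
    unfolding H_def by (rule bdd_belowI[of _ 0]) auto
  show "H \<noteq> {} \<Longrightarrow> 0 \<le> Inf H"
    by (rule cInf_greatest) (auto simp: H_def)
  show "f \<tau> < t" if "0 \<le> \<tau>" "\<tau> < Inf H"
    using that cInf_lower[OF _ bdd, of \<tau>] by (force simp: H_def)
qed

lemma Inf_hitting_le_iff:
  fixes f :: "real \<Rightarrow> real"
  assumes mono: "mono_on {0..} f" and rcont: "continuous (at_right y) f"
    and ne: "{\<tau>. 0 \<le> \<tau> \<and> t \<le> f \<tau>} \<noteq> {}" and y: "0 \<le> y"
  shows "Inf {\<tau>. 0 \<le> \<tau> \<and> t \<le> f \<tau>} \<le> y \<longleftrightarrow> t \<le> f y"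
proof
  let ?H = "{\<tau>. 0 \<le> \<tau> \<and> t \<le> f \<tau>}"
  have bdd: "bdd_below ?H"
    by (rule bdd_belowI[of _ 0]) auto
  assume le: "Inf ?H \<le> y"
  have above: "t \<le> f z" if yz: "y < z" for z
  proof -
    have "Inf ?H < z"
      using le yz by simp
    then obtain a where "a \<in> ?H" "a < z"
      using cInf_less_iff[OF ne bdd] by blast
    then show ?thesis
      using mono by (auto dest!: mono_onD[of _ f a z])
  qed
  have "eventually (\<lambda>z. t \<le> f z) (at_right y)"
    using eventually_at_right_less[of y] by eventually_elim (rule above)
  then show "t \<le> f y"
    using rcont by (intro tendsto_lowerbound[of f]) (auto simp: continuous_within)
next
  assume "t \<le> f y"
  then show "Inf {\<tau>. 0 \<le> \<tau> \<and> t \<le> f \<tau>} \<le> y"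
    using y by (intro cInf_lower bdd_belowI[of _ 0]) auto
qed

locale alpha_stable_subordinator =
  fixes M :: "'a measure" and \<alpha> :: real and U :: "real \<Rightarrow> 'a \<Rightarrow> real"
  assumes stable_subordinator: "stable_subordinator M \<alpha> U" and alpha_pos: "0 < \<alpha>"
begin

sublocale prob_space M
  using stable_subordinator unfolding stable_subordinator_def by blast

lemma borel_measurable_U: "0 \<le> t \<Longrightarrow> U t \<in> borel_measurable M"
  using stable_subordinator unfolding stable_subordinator_def by blast

lemma borel_measurable_U_nat [measurable]: "U (real n) \<in> borel_measurable M"
  by (simp add: borel_measurable_U)

lemma borel_measurable_U_1 [measurable]: "U 1 \<in> borel_measurable M"
  by (simp add: borel_measurable_U)

lemma mono_on_U: "\<omega> \<in> space M \<Longrightarrow> mono_on {0..} (\<lambda>t. U t \<omega>)"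
  using stable_subordinator unfolding stable_subordinator_def by blast

lemma U_nonneg: "\<omega> \<in> space M \<Longrightarrow> 0 \<le> t \<Longrightarrow> 0 \<le> U t \<omega>"
  using stable_subordinator mono_onD[OF mono_on_U, of \<omega> 0 t]
  unfolding stable_subordinator_def by auto

lemma continuous_at_right_U: "\<omega> \<in> space M \<Longrightarrow> 0 \<le> t \<Longrightarrow> continuous (at_right t) (\<lambda>s. U s \<omega>)"
  using stable_subordinator unfolding stable_subordinator_def by blast

lemma laplace_U: "0 \<le> t \<Longrightarrow> 0 \<le> u \<Longrightarrow> expectation (\<lambda>\<omega>. exp (- u * U t \<omega>)) = exp (- t * u powr \<alpha>)"
  using stable_subordinator unfolding stable_subordinator_def by blast

lemma prob_U_le_le_exp:
  assumes t: "0 \<le> t" and u: "0 \<le> u"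
  shows "prob {\<omega>\<in>space M. U t \<omega> \<le> c} \<le> exp (u * c - t * u powr \<alpha>)"
proof -
  have "prob {\<omega>\<in>space M. U t \<omega> \<le> c} = expectation (indicator {\<omega>\<in>space M. U t \<omega> \<le> c})"
    using borel_measurable_U[OF t] by simp
  also have "\<dots> \<le> expectation (\<lambda>\<omega>. exp (u * c) * exp (- u * U t \<omega>))"
  proof (intro integral_mono integrable_real_indicator integrable_const_bound[where B="exp (u * c)"])
    fix \<omega>
    assume "\<omega> \<in> space M"
    then show "indicator {\<omega>\<in>space M. U t \<omega> \<le> c} \<omega> \<le> exp (u * c) * exp (- u * U t \<omega>)"
      using u mult_left_mono[of "U t \<omega>" c u] by (auto simp: indicator_def mult_exp_exp)
  qed (use borel_measurable_U[OF t] U_nonneg t u in \<open>auto simp: less_top[symmetric] mult_nonneg_nonneg\<close>)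
  also have "\<dots> = exp (u * c - t * u powr \<alpha>)"
    using laplace_U[OF t u] by (simp add: exp_diff exp_minus divide_inverse)
  finally show ?thesis .
qed

lemma AE_U_1_pos: "AE \<omega> in M. 0 < U 1 \<omega>"
proof (rule AE_I'[OF null_sets_of_prob_le_exp_diff])
  show "prob {\<omega>\<in>space M. U 1 \<omega> \<le> 0} \<le> exp (0 - x)" if "0 \<le> x" for x
    using prob_U_le_le_exp[of 1 "x powr (1/\<alpha>)" 0] that alpha_pos by (simp add: powr_powr)
qed auto

abbreviation hitting_set :: "real \<Rightarrow> 'a \<Rightarrow> real set" where
  "hitting_set T \<omega> \<equiv> {\<tau>. 0 \<le> \<tau> \<and> T \<le> U \<tau> \<omega>}"

lemma hitting_set_nonempty_iff:
  assumes "\<omega> \<in> space M"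
  shows "hitting_set T \<omega> \<noteq> {} \<longleftrightarrow> (\<exists>n::nat. T \<le> U (real n) \<omega>)"
proof
  assume "hitting_set T \<omega> \<noteq> {}"
  then obtain a where a: "0 \<le> a" "T \<le> U a \<omega>"
    by auto
  obtain n :: nat where "a \<le> real n"
    using real_arch_simple by blast
  then have "T \<le> U (real n) \<omega>"
    using a mono_onD[OF mono_on_U[OF assms], of a "real n"] by simp
  then show "\<exists>n::nat. T \<le> U (real n) \<omega>" ..
qed force

lemma inverse_subordinator_le_iff:
  assumes "\<omega> \<in> space M" "hitting_set T \<omega> \<noteq> {}" "0 \<le> y"
  shows "inverse_subordinator U T \<omega> \<le> y \<longleftrightarrow> T \<le> U y \<omega>"
  unfolding inverse_subordinator_def
  by (rule Inf_hitting_le_iff[OF mono_on_U continuous_at_right_U]) (use assms in auto)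

lemma borel_measurable_inverse_subordinator [measurable]:
  "inverse_subordinator U T \<in> borel_measurable M"
proof -
  \<comment> \<open>off \<open>E\<close> the hitting set is empty and the inverse subordinator is the junk value \<open>Inf {}\<close>\<close>
  define E where "E = {\<omega>\<in>space M. \<exists>n::nat. T \<le> U (real n) \<omega>}"
  have E [measurable]: "E \<in> sets M"
    unfolding E_def by measurable
  have le_iff: "inverse_subordinator U T \<omega> \<le> y \<longleftrightarrow> (0 \<le> y \<and> T \<le> U y \<omega>) \<or> (\<omega> \<notin> E \<and> Inf {} \<le> y)"
    if \<omega>: "\<omega> \<in> space M" for \<omega> y
  proof (cases "\<omega> \<in> E")
    case True
    then have ne: "hitting_set T \<omega> \<noteq> {}"
      using hitting_set_nonempty_iff[OF \<omega>] by (auto simp: E_def)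
    then show ?thesis
      using inverse_subordinator_le_iff[OF \<omega> ne] Inf_hitting_nonneg[OF ne] True
      by (cases "0 \<le> y") (auto simp: inverse_subordinator_def)
  next
    case False
    then have empty: "hitting_set T \<omega> = {}"
      using hitting_set_nonempty_iff[OF \<omega>] \<omega> by (auto simp: E_def)
    then have "inverse_subordinator U T \<omega> = Inf {}"
      unfolding inverse_subordinator_def by (simp only:)
    then show ?thesis
      using False empty by auto
  qed
  have "{\<omega>\<in>space M. inverse_subordinator U T \<omega> \<le> y} \<in> sets M" for y
  proof (cases "0 \<le> y")
    case True
    then have [measurable]: "U y \<in> borel_measurable M"
      by (rule borel_measurable_U)
    show ?thesis
      using le_iff by (subst Collect_cong[of _ "\<lambda>\<omega>. \<omega> \<in> space M \<and> ((0 \<le> y \<and> T \<le> U y \<omega>) \<or> (\<omega> \<notin> E \<and> Inf {} \<le> y))"]) auto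
  next
    case False
    then show ?thesis
      using le_iff by (subst Collect_cong[of _ "\<lambda>\<omega>. \<omega> \<in> space M \<and> \<omega> \<notin> E \<and> Inf {} \<le> y"]) auto
  qed
  then show ?thesis
    by (simp add: borel_measurable_iff_le)
qed

lemma AE_inverse_subordinator_nonneg: "AE \<omega> in M. 0 \<le> inverse_subordinator U T \<omega>"
proof (rule AE_I'[OF null_sets_of_prob_le_exp_diff])
  let ?N = "{\<omega>\<in>space M. \<forall>n::nat. U (real n) \<omega> < T}"
  show "?N \<in> sets M"
    by measurable
  show "prob ?N \<le> exp (T - x)" if x: "0 \<le> x" for x
  proof -
    obtain n :: nat where n: "x \<le> real n"
      using real_arch_simple by blast
    have "U x \<omega> \<le> T" if \<omega>: "\<omega> \<in> ?N" for \<omega>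
    proof -
      have "U x \<omega> \<le> U (real n) \<omega>"
        using \<omega> x n by (intro mono_onD[OF mono_on_U]) auto
      moreover have "U (real n) \<omega> < T"
        using \<omega> by simp
      ultimately show ?thesis
        by linarith
    qed
    then have "?N \<subseteq> {\<omega>\<in>space M. U x \<omega> \<le> T}"
      by auto
    then have "prob ?N \<le> prob {\<omega>\<in>space M. U x \<omega> \<le> T}"
      using borel_measurable_U[OF x] by (intro finite_measure_mono) measurable
    also have "\<dots> \<le> exp (T - x)"
      using prob_U_le_le_exp[OF x, of 1 T] by simp
    finally show ?thesis .
  qed
  show "{\<omega>\<in>space M. \<not> 0 \<le> inverse_subordinator U T \<omega>} \<subseteq> ?N"
  proof safe
    fix \<omega> n
    assume \<omega>: "\<omega> \<in> space M" and "\<not> 0 \<le> inverse_subordinator U T \<omega>"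
    then have "hitting_set T \<omega> = {}"
      using Inf_hitting_nonneg[where f="\<lambda>\<tau>. U \<tau> \<omega>" and t=T] by (auto simp: inverse_subordinator_def)
    then have "real n \<notin> hitting_set T \<omega>"
      by blast
    then show "U (real n) \<omega> < T"
      by (simp add: not_le)
  qed
qed

lemma less_inverse_subordinator_imp:
  "0 \<le> \<tau> \<Longrightarrow> \<tau> < inverse_subordinator U T \<omega> \<Longrightarrow> U \<tau> \<omega> < T"
  unfolding inverse_subordinator_def by (rule less_Inf_hitting_imp_less)

lemma prob_U_less_le_prob_scaled_U_1:
  assumes \<tau>: "0 \<le> \<tau>"
  shows "prob {\<omega>\<in>space M. U \<tau> \<omega> < t} \<le> prob {\<omega>\<in>space M. \<tau> powr (1/\<alpha>) * U 1 \<omega> \<le> t}"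
proof (rule prob_less_le_prob_le_of_laplace_eq)
  fix n :: nat
  have "(real n * \<tau> powr (1/\<alpha>)) powr \<alpha> = \<tau> * real n powr \<alpha>"
    using \<tau> alpha_pos by (simp add: powr_mult powr_powr)
  then show "expectation (\<lambda>\<omega>. exp (- real n * U \<tau> \<omega>)) = expectation (\<lambda>\<omega>. exp (- real n * (\<tau> powr (1/\<alpha>) * U 1 \<omega>)))"
    using laplace_U[OF \<tau>, of "real n"] laplace_U[of 1 "real n * \<tau> powr (1/\<alpha>)"]
    by (simp add: mult.assoc)
qed (use borel_measurable_U[OF \<tau>] U_nonneg \<tau> in auto)

lemma emeasure_less_inverse_subordinator_le:
  assumes \<tau>: "0 \<le> \<tau>"
  shows "emeasure M {\<omega>\<in>space M. \<tau> < max 0 (inverse_subordinator U T \<omega>)}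
    \<le> emeasure M {\<omega>\<in>space M. \<tau> powr (1/\<alpha>) * U 1 \<omega> \<le> T}"
proof -
  have "emeasure M {\<omega>\<in>space M. \<tau> < max 0 (inverse_subordinator U T \<omega>)} \<le> emeasure M {\<omega>\<in>space M. U \<tau> \<omega> < T}"
    using less_inverse_subordinator_imp \<tau> borel_measurable_U[OF \<tau>] by (intro emeasure_mono) auto
  also have "\<dots> \<le> emeasure M {\<omega>\<in>space M. \<tau> powr (1/\<alpha>) * U 1 \<omega> \<le> T}"
    using prob_U_less_le_prob_scaled_U_1[OF \<tau>, of T] by (simp add: emeasure_eq_measure)
  finally show ?thesis .
qed

interpretation M_lborel: pair_sigma_finite M lborel ..

lemma nn_integral_exp_scaled_U_1:
  assumes "0 \<le> \<tau>"
  shows "(\<integral>\<^sup>+\<omega>. ennreal (exp (- (\<tau> powr (1/\<alpha>) * U 1 \<omega>))) \<partial>M) = ennreal (exp (- \<tau>))"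
proof -
  have "(\<integral>\<^sup>+\<omega>. ennreal (exp (- (\<tau> powr (1/\<alpha>) * U 1 \<omega>))) \<partial>M)
      = ennreal (expectation (\<lambda>\<omega>. exp (- (\<tau> powr (1/\<alpha>)) * U 1 \<omega>)))"
    using U_nonneg
    by (subst nn_integral_eq_integral[symmetric])
       (auto intro!: integrable_const_bound[where B=1] mult_nonneg_nonneg)
  also have "\<dots> = exp (- \<tau>)"
    using laplace_U[of 1 "\<tau> powr (1/\<alpha>)"] assms alpha_pos by (simp add: powr_powr)
  finally show ?thesis .
qed

lemma nn_integral_U_1_neg_powr:
  assumes p: "0 < p"
  shows "(\<integral>\<^sup>+\<omega>. ennreal (U 1 \<omega> powr (- (p * \<alpha>))) \<partial>M) = ennreal (Gamma (p + 1) / Gamma (p * \<alpha> + 1))"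
proof -
  define G where "G = Gamma (p * \<alpha> + 1)"
  have G: "0 < G"
    using p alpha_pos by (auto simp: G_def intro!: Gamma_real_pos add_pos_pos)
  let ?f = "\<lambda>\<tau>::real. ennreal (p * \<tau> powr (p - 1)) * indicator {0..} \<tau>"
  let ?I = "\<integral>\<^sup>+\<omega>. ennreal (U 1 \<omega> powr (- (p * \<alpha>))) \<partial>M"
  have "ennreal G * ?I
      = (\<integral>\<^sup>+\<omega>. ennreal (G * U 1 \<omega> powr (- (p * \<alpha>))) \<partial>M)"
    using G by (subst nn_integral_cmult[symmetric]) (auto simp: ennreal_mult)
  also have "\<dots> = (\<integral>\<^sup>+\<omega>. (\<integral>\<^sup>+\<tau>. ?f \<tau> * ennreal (exp (- (\<tau> powr (1/\<alpha>) * U 1 \<omega>))) \<partial>lborel) \<partial>M)"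
    using AE_U_1_pos
    by (intro nn_integral_cong_AE) (auto simp: G_def nn_integral_powr_exp_scaled[OF p alpha_pos])
  also have "\<dots> = (\<integral>\<^sup>+\<tau>. ?f \<tau> * (\<integral>\<^sup>+\<omega>. ennreal (exp (- (\<tau> powr (1/\<alpha>) * U 1 \<omega>))) \<partial>M) \<partial>lborel)"
    by (subst M_lborel.Fubini'[symmetric]) (measurable, simp add: nn_integral_cmult)
  also have "\<dots> = (\<integral>\<^sup>+\<tau>. ennreal p * ennreal (indicator {0..} \<tau> * \<tau> powr (p - 1) / exp \<tau>) \<partial>lborel)"
  proof (intro nn_integral_cong)
    fix \<tau> :: real
    show "?f \<tau> * (\<integral>\<^sup>+\<omega>. ennreal (exp (- (\<tau> powr (1/\<alpha>) * U 1 \<omega>))) \<partial>M)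
        = ennreal p * ennreal (indicator {0..} \<tau> * \<tau> powr (p - 1) / exp \<tau>)"
      using p nn_integral_exp_scaled_U_1[of \<tau>]
      by (cases "0 \<le> \<tau>") (auto simp: ennreal_mult[symmetric] exp_minus field_simps)
  qed
  also have "\<dots> = ennreal (p * Gamma p)"
    using p by (simp add: nn_integral_cmult Gamma_conv_nn_integral_real ennreal_mult)
  also have "p * Gamma p = Gamma (p + 1)"
    using p by (simp add: Gamma_plus1 nonpos_Ints_def)
  finally have eq: "ennreal G * ?I = ennreal (Gamma (p + 1))" .
  have "?I = ennreal (1 / G) * (ennreal G * ?I)"
    using G by (simp add: mult.assoc[symmetric] ennreal_mult[symmetric])
  also have "\<dots> = ennreal (Gamma (p + 1) / G)"
    unfolding eq using G Gamma_real_pos[of "p + 1"] p by (simp add: ennreal_mult[symmetric])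
  finally show ?thesis
    by (simp add: G_def)
qed

lemma nn_integral_inverse_subordinator_powr_le:
  assumes p: "0 < p" and T: "0 \<le> T"
  shows "(\<integral>\<^sup>+\<omega>. ennreal (max 0 (inverse_subordinator U T \<omega>) powr p) \<partial>M)
    \<le> ennreal (T powr (p * \<alpha>) * (Gamma (p + 1) / Gamma (p * \<alpha> + 1)))"
proof -
  have Gamma_pos: "0 < Gamma (p + 1)" "0 < Gamma (p * \<alpha> + 1)"
    using p alpha_pos by (auto intro!: Gamma_real_pos add_pos_pos)
  let ?S = "inverse_subordinator U T"
  let ?f = "\<lambda>\<tau>::real. ennreal (p * \<tau> powr (p - 1)) * indicator {0..} \<tau>"
  have "(\<integral>\<^sup>+\<omega>. ennreal (max 0 (?S \<omega>) powr p) \<partial>M)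
      = (\<integral>\<^sup>+\<omega>. (\<integral>\<^sup>+\<tau>. ?f \<tau> * (if \<tau> < max 0 (?S \<omega>) then 1 else 0) \<partial>lborel) \<partial>M)"
    by (intro nn_integral_cong nn_integral_powr_less[OF p, symmetric]) simp
  also have "\<dots> = (\<integral>\<^sup>+\<tau>. (\<integral>\<^sup>+\<omega>. ?f \<tau> * (if \<tau> < max 0 (?S \<omega>) then 1 else 0) \<partial>M) \<partial>lborel)"
    by (rule M_lborel.Fubini'[symmetric]) measurable
  also have "\<dots> = (\<integral>\<^sup>+\<tau>. ?f \<tau> * emeasure M {\<omega>\<in>space M. \<tau> < max 0 (?S \<omega>)} \<partial>lborel)"
    by (intro nn_integral_cong nn_integral_cmult_if) measurable
  also have "\<dots> \<le> (\<integral>\<^sup>+\<tau>. ?f \<tau> * emeasure M {\<omega>\<in>space M. \<tau> powr (1/\<alpha>) * U 1 \<omega> \<le> T} \<partial>lborel)"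
    by (intro nn_integral_mono) (auto intro!: mult_left_mono emeasure_less_inverse_subordinator_le simp: indicator_def)
  also have "\<dots> = (\<integral>\<^sup>+\<tau>. (\<integral>\<^sup>+\<omega>. ?f \<tau> * (if \<tau> powr (1/\<alpha>) * U 1 \<omega> \<le> T then 1 else 0) \<partial>M) \<partial>lborel)"
    by (intro nn_integral_cong nn_integral_cmult_if[symmetric]) measurable
  also have "\<dots> = (\<integral>\<^sup>+\<omega>. (\<integral>\<^sup>+\<tau>. ?f \<tau> * (if \<tau> powr (1/\<alpha>) * U 1 \<omega> \<le> T then 1 else 0) \<partial>lborel) \<partial>M)"
    by (rule M_lborel.Fubini') measurable
  also have "\<dots> = (\<integral>\<^sup>+\<omega>. ennreal (T powr (p * \<alpha>)) * ennreal (U 1 \<omega> powr (- (p * \<alpha>))) \<partial>M)"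
  proof (rule nn_integral_cong_AE)
    show "AE \<omega> in M. (\<integral>\<^sup>+\<tau>. ?f \<tau> * (if \<tau> powr (1/\<alpha>) * U 1 \<omega> \<le> T then 1 else 0) \<partial>lborel)
        = ennreal (T powr (p * \<alpha>)) * ennreal (U 1 \<omega> powr (- (p * \<alpha>)))"
      using AE_U_1_pos
    proof eventually_elim
      case (elim \<omega>)
      have "(T / U 1 \<omega>) powr (p * \<alpha>) = T powr (p * \<alpha>) * U 1 \<omega> powr (- (p * \<alpha>))"
        using elim T by (subst powr_divide) (auto simp: powr_minus divide_inverse)
      then show ?case
        using nn_integral_powr_scaled_le[OF p alpha_pos elim T] by (simp add: ennreal_mult)
    qed
  qed
  also have "\<dots> = ennreal (T powr (p * \<alpha>) * (Gamma (p + 1) / Gamma (p * \<alpha> + 1)))"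
    using Gamma_pos by (subst nn_integral_cmult) (measurable, simp add: nn_integral_U_1_neg_powr[OF p] ennreal_mult[symmetric])
  finally show ?thesis .
qed

lemma integrable_inverse_subordinator_powr:
  assumes p: "0 < p" and T: "0 \<le> T"
  shows "integrable M (\<lambda>\<omega>. max 0 (inverse_subordinator U T \<omega>) powr p)"
    and "expectation (\<lambda>\<omega>. max 0 (inverse_subordinator U T \<omega>) powr p)
      \<le> T powr (p * \<alpha>) * (Gamma (p + 1) / Gamma (p * \<alpha> + 1))"
proof -
  let ?m = "\<lambda>\<omega>. max 0 (inverse_subordinator U T \<omega>) powr p"
  have bound: "(\<integral>\<^sup>+\<omega>. ennreal (?m \<omega>) \<partial>M) \<le> ennreal (T powr (p * \<alpha>) * (Gamma (p + 1) / Gamma (p * \<alpha> + 1)))"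
    by (rule nn_integral_inverse_subordinator_powr_le[OF p T])
  then show int: "integrable M ?m"
    by (intro integrableI_nonneg) (auto simp: top.not_eq_extremum order_le_less_trans)
  have "ennreal (expectation ?m) \<le> ennreal (T powr (p * \<alpha>) * (Gamma (p + 1) / Gamma (p * \<alpha> + 1)))"
    using bound int by (simp add: nn_integral_eq_integral[symmetric])
  then show "expectation ?m \<le> T powr (p * \<alpha>) * (Gamma (p + 1) / Gamma (p * \<alpha> + 1))"
    using p alpha_pos by (subst (asm) ennreal_le_iff) (auto intro!: divide_nonneg_pos Gamma_real_pos add_pos_pos)
qed

lemma AE_bachelier_atm_minus_bs_atm_inverse_subordinator:
  assumes "0 \<le> \<sigma>" "0 \<le> Z0"
  shows "AE \<omega> in M. 0 \<le> bachelier_atm (\<sigma> * Z0) (inverse_subordinator U T \<omega>) - bs_atm Z0 \<sigma> (inverse_subordinator U T \<omega>)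
    \<and> bachelier_atm (\<sigma> * Z0) (inverse_subordinator U T \<omega>) - bs_atm Z0 \<sigma> (inverse_subordinator U T \<omega>)
      \<le> Z0 * \<sigma>^3 / (24 * sqrt (2*pi)) * max 0 (inverse_subordinator U T \<omega>) powr (3/2)"
  using AE_inverse_subordinator_nonneg[of T]
proof eventually_elim
  case (elim \<omega>)
  then show ?case
    using bachelier_atm_minus_bs_atm_bounds[OF elim assms] by (simp add: max_absorb2)
qed

lemma integrable_bachelier_atm_inverse_subordinator:
  assumes "0 \<le> T"
  shows "integrable M (\<lambda>\<omega>. bachelier_atm \<sigma>Ba (inverse_subordinator U T \<omega>))"
proof (rule integrable_cong_AE_imp)
  show "integrable M (\<lambda>\<omega>. \<sigma>Ba / sqrt (2*pi) * max 0 (inverse_subordinator U T \<omega>) powr (1/2))"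
    using integrable_inverse_subordinator_powr(1)[of "1/2" T] assms by simp
  show "AE \<omega> in M. \<sigma>Ba / sqrt (2*pi) * max 0 (inverse_subordinator U T \<omega>) powr (1/2)
      = bachelier_atm \<sigma>Ba (inverse_subordinator U T \<omega>)"
    using AE_inverse_subordinator_nonneg[of T]
    by eventually_elim (simp add: bachelier_atm_def powr_half_sqrt)
qed (simp add: bachelier_atm_def)

lemma subordinated_bachelier_minus_bs_bounds:
  assumes T: "0 \<le> T" and \<sigma>: "0 \<le> \<sigma>" and Z0: "0 \<le> Z0"
  defines "S \<equiv> inverse_subordinator U T"
  shows "0 \<le> (\<integral>\<omega>. bachelier_atm (\<sigma> * Z0) (S \<omega>) \<partial>M) - (\<integral>\<omega>. bs_atm Z0 \<sigma> (S \<omega>) \<partial>M)"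
    and "(\<integral>\<omega>. bachelier_atm (\<sigma> * Z0) (S \<omega>) \<partial>M) - (\<integral>\<omega>. bs_atm Z0 \<sigma> (S \<omega>) \<partial>M)
      \<le> Z0 * \<sigma>^3 / (24 * sqrt (2*pi)) * (T powr (3/2 * \<alpha>) * (Gamma (5/2) / Gamma (3/2 * \<alpha> + 1)))"
proof -
  let ?Ba = "\<lambda>\<omega>. bachelier_atm (\<sigma> * Z0) (S \<omega>)"
  let ?Bs = "\<lambda>\<omega>. bs_atm Z0 \<sigma> (S \<omega>)"
  let ?c = "Z0 * \<sigma>^3 / (24 * sqrt (2*pi))"
  let ?m = "\<lambda>\<omega>. max 0 (S \<omega>) powr (3/2)"
  have diff_bounds: "AE \<omega> in M. 0 \<le> ?Ba \<omega> - ?Bs \<omega> \<and> ?Ba \<omega> - ?Bs \<omega> \<le> ?c * ?m \<omega>"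
    unfolding S_def using \<sigma> Z0 by (rule AE_bachelier_atm_minus_bs_atm_inverse_subordinator)
  have int_Ba: "integrable M ?Ba"
    unfolding S_def using T by (rule integrable_bachelier_atm_inverse_subordinator)
  have int_m: "integrable M ?m"
    using integrable_inverse_subordinator_powr(1)[of "3/2" T] T by (simp add: S_def)
  have int_diff: "integrable M (\<lambda>\<omega>. ?Ba \<omega> - ?Bs \<omega>)"
  proof (rule Bochner_Integration.integrable_bound)
    show "integrable M (\<lambda>\<omega>. ?c * ?m \<omega>)"
      using int_m by simp
    show "AE \<omega> in M. norm (?Ba \<omega> - ?Bs \<omega>) \<le> norm (?c * ?m \<omega>)"
      using diff_bounds by eventually_elim (use \<sigma> Z0 in auto)
  qed (simp add: S_def bachelier_atm_def bs_atm_def)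
  then have diff_eq: "(\<integral>\<omega>. ?Ba \<omega> \<partial>M) - (\<integral>\<omega>. ?Bs \<omega> \<partial>M) = (\<integral>\<omega>. ?Ba \<omega> - ?Bs \<omega> \<partial>M)"
    using int_Ba Bochner_Integration.integrable_diff[OF int_Ba int_diff] by simp
  show "0 \<le> (\<integral>\<omega>. ?Ba \<omega> \<partial>M) - (\<integral>\<omega>. ?Bs \<omega> \<partial>M)"
    unfolding diff_eq using diff_bounds by (intro integral_nonneg_AE) (auto elim: eventually_mono)
  have "(\<integral>\<omega>. ?Ba \<omega> - ?Bs \<omega> \<partial>M) \<le> (\<integral>\<omega>. ?c * ?m \<omega> \<partial>M)"
    using diff_bounds int_diff int_m by (intro integral_mono_AE) (auto elim: eventually_mono)
  also have "\<dots> = ?c * expectation ?m"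
    by simp
  also have "\<dots> \<le> ?c * (T powr (3/2 * \<alpha>) * (Gamma (5/2) / Gamma (3/2 * \<alpha> + 1)))"
    using integrable_inverse_subordinator_powr(2)[of "3/2" T] T \<sigma> Z0
    by (intro mult_left_mono) (simp_all add: S_def)
  finally show "(\<integral>\<omega>. ?Ba \<omega> \<partial>M) - (\<integral>\<omega>. ?Bs \<omega> \<partial>M)
      \<le> ?c * (T powr (3/2 * \<alpha>) * (Gamma (5/2) / Gamma (3/2 * \<alpha> + 1)))"
    unfolding diff_eq .
qed

end

theorem mainTheorem3:
  fixes M :: "'a measure" and U :: "real \<Rightarrow> 'a \<Rightarrow> real"
    and \<alpha> Z0 K r \<sigma> \<sigma>Ba T :: real
  assumes "0 < \<alpha>" and "\<alpha> < 1"
    and "stable_subordinator M \<alpha> U"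
    and "K = Z0" and "0 < Z0" and "r = 0" and "0 < \<sigma>" and "\<sigma>Ba = \<sigma> * Z0" and "0 < T"
  defines "S \<equiv> inverse_subordinator U"
  shows "0 \<le> (\<integral>\<omega>. bachelier_atm \<sigma>Ba (S T \<omega>) \<partial>M) - (\<integral>\<omega>. bs_atm Z0 \<sigma> (S T \<omega>) \<partial>M)
    \<and> (\<integral>\<omega>. bachelier_atm \<sigma>Ba (S T \<omega>) \<partial>M) - (\<integral>\<omega>. bs_atm Z0 \<sigma> (S T \<omega>) \<partial>M)
        \<le> T powr (3/2 * \<alpha>) * Gamma (5/2) / Gamma (3/2 * \<alpha> + 1)
           * (Z0 / (12 * sqrt (2 * pi))) * \<sigma> ^ 3"
proof -
  interpret alpha_stable_subordinator M \<alpha> U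
    using assms by unfold_locales
  let ?D = "(\<integral>\<omega>. bachelier_atm (\<sigma> * Z0) (S T \<omega>) \<partial>M) - (\<integral>\<omega>. bs_atm Z0 \<sigma> (S T \<omega>) \<partial>M)"
  let ?B = "T powr (3/2 * \<alpha>) * (Gamma (5/2) / Gamma (3/2 * \<alpha> + 1))"
  have "0 \<le> ?D" and "?D \<le> Z0 * \<sigma>^3 / (24 * sqrt (2*pi)) * ?B"
    using subordinated_bachelier_minus_bs_bounds[of T \<sigma> Z0] assms by (simp_all add: S_def)
  moreover have "Z0 * \<sigma>^3 / (24 * sqrt (2*pi)) * ?B \<le> Z0 * \<sigma>^3 / (12 * sqrt (2*pi)) * ?B"
    using assms by (intro mult_right_mono divide_left_mono) (auto intro!: Gamma_real_pos)
  ultimately show ?thesis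
    by (simp add: assms(8) field_simps)
qed

end
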